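(* Let $T\in\mathbf B_m(\Omega)$ with $0\in\Omega$, and put $\mathcal H_n=\ker T^n$, $T_n=T|_{\mathcal H_n}$ (a nilpotent operator on a finite-dimensional space). If $S\in\mathcal C_T(\Omega)$, then $\phi_S$ is analytic on $\Omega$ and $S|_{\mathcal H_n}=\phi_S(T_n)$ for all $n\ge1$.
   Context: $\mathcal H$ is a complex separable Hilbert space. For a connected open $\Omega\subset\mathbb C$ and integer $m\ge1$, $\mathbf B_m(\Omega)$ is the set of $T\in\mathcal B(\mathcal H)$ with: $\Omega\subset\sigma(T)$; $\operatorname{Ran}(T-w)=\mathcal H$ for $w\in\Omega$; $\bigvee_{w\in\Omega}\ker(T-w)=\mathcal H$; $\dim\ker(T-w)=m$ for $w\in\Omega$. $\mathcal N_\lambda=\ker(T-\lambda)$. For $S$ in the commutant $\{T\}'$, $S\mathcal N_\lambda\subset\mathcal N_\lambda$ and $\Phi_S(\lambda)=S|_{\mathcal N_\lambda}$. $\mathcal C_T(\Omega)$ is the set of $S\in\{T\}'$ for which there is a scalar function $\phi_S$ on $\Omega$ with $\Phi_S(\lambda)=\phi_S(\lambda)I_{\mathcal N_\lambda}$ for all $\lambda\in\Omega$. $\phi_S(T_n)$ is defined by the holomorphic functional calculus (equivalently, by the Taylor polynomial of $\phi_S$ at $0$ of degree $n-1$). *)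

theory Defs
  imports "HOL-Analysis.Analysis"
begin

text \<open>A complex Hilbert space: a complete real inner product space carrying a
complex scalar multiplication that extends the real one and is compatible with
the norm (the complex inner product is then recovered by polarization).\<close>

class chilbert_space = real_inner + complete_space +
  fixes scaleC :: "complex \<Rightarrow> 'a \<Rightarrow> 'a"
  assumes scaleC_add_right: "scaleC a (x + y) = scaleC a x + scaleC a y"
    and scaleC_add_left: "scaleC (a + b) x = scaleC a x + scaleC b x"
    and scaleC_scaleC: "scaleC a (scaleC b x) = scaleC (a * b) x"
    and scaleC_one: "scaleC 1 x = x"
    and scaleR_scaleC: "scaleR r x = scaleC (complex_of_real r) x"
    and norm_scaleC: "norm (scaleC a x) = cmod a * norm x"

definition cblinear :: "('a::chilbert_space \<Rightarrow> 'a) \<Rightarrow> bool" where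
  "cblinear T \<longleftrightarrow> bounded_linear T \<and> (\<forall>c x. T (scaleC c x) = scaleC c (T x))"

definition eigsp :: "('a::chilbert_space \<Rightarrow> 'a) \<Rightarrow> complex \<Rightarrow> 'a set" where
  "eigsp T w = {x. T x = scaleC w x}"

definition op_spectrum :: "('a::chilbert_space \<Rightarrow> 'a) \<Rightarrow> complex set" where
  "op_spectrum T = {w. \<not> (\<exists>R. cblinear R \<and> (\<forall>x. R (T x - scaleC w x) = x)
                                        \<and> (\<forall>x. T (R x) - scaleC w (R x) = x))}"

definition CD_class :: "complex set \<Rightarrow> nat \<Rightarrow> ('a::chilbert_space \<Rightarrow> 'a) \<Rightarrow> bool" where
  "CD_class \<Omega> m T \<longleftrightarrow> cblinear T
     \<and> \<Omega> \<subseteq> op_spectrum T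
     \<and> (\<forall>w\<in>\<Omega>. surj (\<lambda>x. T x - scaleC w x))
     \<and> closure (module.span scaleC (\<Union>w\<in>\<Omega>. eigsp T w)) = UNIV
     \<and> (\<forall>w\<in>\<Omega>. vector_space.dim scaleC (eigsp T w) = m)"

definition commutant :: "('a::chilbert_space \<Rightarrow> 'a) \<Rightarrow> ('a \<Rightarrow> 'a) set" where
  "commutant T = {S. cblinear S \<and> S \<circ> T = T \<circ> S}"

definition scalar_symbol :: "('a::chilbert_space \<Rightarrow> 'a) \<Rightarrow> complex set \<Rightarrow> ('a \<Rightarrow> 'a) \<Rightarrow> (complex \<Rightarrow> complex) \<Rightarrow> bool" where
  "scalar_symbol T \<Omega> S \<phi> \<longleftrightarrow> (\<forall>w\<in>\<Omega>. \<forall>x\<in>eigsp T w. S x = scaleC (\<phi> w) x)"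

definition CT_class :: "('a::chilbert_space \<Rightarrow> 'a) \<Rightarrow> complex set \<Rightarrow> ('a \<Rightarrow> 'a) set" where
  "CT_class T \<Omega> = {S. S \<in> commutant T \<and> (\<exists>\<phi>. scalar_symbol T \<Omega> S \<phi>)}"

end

theory Submission
  imports Defs "HOL-Complex_Analysis.Complex_Analysis"
begin

(* For w0 in Omega the operator A = T - w0 is a bounded surjection, so by the open mapping
   theorem it has a right inverse R with |R y| <= C |y|. Hence every x with A^n x = 0 lies in an
   infinite chain c with A c_0 = 0, A c_(k+1) = c_k, c_(n-1-i) = A^i x and |c_k| <= K D^k.
   For small u the vector gamma(u) = sum u^k c_k satisfies T gamma(u) = (w0 + u) gamma(u), so
   S gamma(u) = phi(w0 + u) gamma(u). Pairing with a vector v gives holomorphic functions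
   f(u) = <gamma(u), v> and g(u) = <S gamma(u), v> with Taylor coefficients <c_k, v> and
   <S c_k, v>, and g = phi(w0 + _) f near 0. A chain starting at an eigenvector v gives
   f(0) = |v|^2 > 0, so phi(w0 + _) = g / f is analytic at 0. Comparing the coefficients of
   u^(n-1) in g = phi(w0 + _) f then gives S x = sum_(k<n) phi^(k)(w0) / k! A^k x. *)

context chilbert_space begin
subclass banach ..
end

lemma scaleC_zero_left [simp]: "scaleC 0 (x::'a::chilbert_space) = 0"
proof -
  have "scaleC 0 x = scaleC 0 x + scaleC 0 x" by (metis add_0 scaleC_add_left)
  then show ?thesis by simp
qed

lemma scaleC_zero_right [simp]: "scaleC c (0::'a::chilbert_space) = 0"
proof -
  have "scaleC c (0::'a) = scaleC c 0 + scaleC c 0" by (metis add_0 scaleC_add_right)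
  then show ?thesis by simp
qed

lemma scaleC_minus_left: "scaleC (- c) (x::'a::chilbert_space) = - scaleC c x"
proof -
  have "scaleC (- c) x + scaleC c x = 0" by (simp flip: scaleC_add_left)
  then show ?thesis by (simp add: add_eq_0_iff2)
qed

lemma scaleC_diff_right: "scaleC c (x - y::'a::chilbert_space) = scaleC c x - scaleC c y"
proof -
  have "scaleC c (x - y) + scaleC c y = scaleC c x" by (simp flip: scaleC_add_right)
  then show ?thesis by (simp add: eq_diff_eq)
qed

lemma bounded_linear_scaleC: "bounded_linear (\<lambda>x::'a::chilbert_space. scaleC c x)"
  by (rule bounded_linear_intro[where K="cmod c"])
     (auto simp: scaleC_add_right scaleR_scaleC scaleC_scaleC norm_scaleC mult.commute)

lemma scaleC_ii: "scaleC \<i> (scaleC \<i> (x::'a::chilbert_space)) = - x"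
  by (simp add: scaleC_scaleC scaleC_minus_left scaleC_one)

lemma inner_scaleC_ii: "inner (scaleC \<i> x) (scaleC \<i> (y::'a::chilbert_space)) = inner x y"
  by (simp add: dot_norm norm_scaleC flip: scaleC_add_right)

lemma cblinearD:
  assumes "cblinear T"
  shows "bounded_linear T" "T (scaleC c x) = scaleC c (T x)"
  using assms by (auto simp: cblinear_def)

lemma cblinear_id: "cblinear (\<lambda>x::'a::chilbert_space. x)"
  by (simp add: cblinear_def bounded_linear_ident)

lemma cblinear_minus_scaleC:
  assumes "cblinear T"
  shows "cblinear (\<lambda>x. T x - scaleC w x)"
  unfolding cblinear_def
  by (auto intro!: bounded_linear_sub bounded_linear_scaleC cblinearD[OF assms]
      simp: cblinearD(2)[OF assms] scaleC_scaleC scaleC_diff_right mult.commute)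

text \<open>The complex inner product, recovered from the real one by polarization.\<close>
definition cinner :: "'a::chilbert_space \<Rightarrow> 'a \<Rightarrow> complex" where
  "cinner x u = Complex (inner x u) (inner x (scaleC \<i> u))"

lemma bounded_linear_cinner_left: "bounded_linear (\<lambda>x. cinner x u)"
proof -
  have "bounded_linear (\<lambda>x. of_real (inner x u) + of_real (inner x (scaleC \<i> u)) * \<i>)"
    by (intro bounded_linear_add bounded_linear_mult_const
        bounded_linear_compose[OF bounded_linear_of_real] bounded_linear_inner_left)
  moreover have "(\<lambda>x. of_real (inner x u) + of_real (inner x (scaleC \<i> u)) * \<i>) = (\<lambda>x. cinner x u)"
    by (auto simp: cinner_def complex_eq_iff)
  ultimately show ?thesis by simp
qed

lemma cinner_scaleC_left: "cinner (scaleC c x) u = c * cinner x u"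
proof -
  interpret bounded_linear "\<lambda>x. cinner x u" by (rule bounded_linear_cinner_left)
  have ii: "cinner (scaleC \<i> x) u = \<i> * cinner x u"
    using inner_scaleC_ii[of "scaleC \<i> x" u] inner_scaleC_ii[of x u]
    by (simp add: cinner_def complex_eq_iff scaleC_ii)
  have "scaleC c x = Re c *\<^sub>R x + Im c *\<^sub>R scaleC \<i> x"
    by (subst complex_eq[of c]) (simp add: scaleC_add_left scaleR_scaleC scaleC_scaleC mult.commute)
  then have "cinner (scaleC c x) u = Re c *\<^sub>R cinner x u + Im c *\<^sub>R (\<i> * cinner x u)"
    by (simp add: add scale ii)
  also have "\<dots> = c * cinner x u" by (simp add: complex_eq_iff)
  finally show ?thesis .
qed

lemma cinner_self: "cinner x x = of_real ((norm x)\<^sup>2)"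
proof -
  have "inner x (scaleC \<i> x) = inner (scaleC \<i> x) (scaleC \<i> (scaleC \<i> x))"
    by (simp add: inner_scaleC_ii)
  also have "\<dots> = - inner x (scaleC \<i> x)" by (simp add: scaleC_ii inner_commute)
  finally have "inner x (scaleC \<i> x) = 0" by simp
  then show ?thesis by (simp add: cinner_def complex_eq_iff power2_norm_eq_inner)
qed

lemma cinner_eqI:
  assumes "\<And>u. cinner x u = cinner y u"
  shows "x = (y::'a::chilbert_space)"
proof -
  interpret bounded_linear "\<lambda>z. cinner z (x - y)" by (rule bounded_linear_cinner_left)
  have "cinner (x - y) (x - y) = 0" using assms[of "x - y"] by (simp add: diff)
  then show ?thesis by (simp add: cinner_self)
qed

lemma bounded_linear_surj_image_ball_dense:
  fixes A :: "'a::banach \<Rightarrow> 'b::banach"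
  assumes "bounded_linear A" and "surj A"
  obtains N e where "N > 0" "e > 0"
    "\<And>z d. norm z < e \<Longrightarrow> d > 0 \<Longrightarrow> \<exists>x. norm x < N \<and> dist (A x) z < d"
proof -
  interpret A: bounded_linear A by fact
  define F where "F n = closure (A ` ball 0 (real (Suc n)))" for n
  have covers: "(\<Union>n. F n) = UNIV"
  proof (intro equalityI subsetI UNIV_I)
    fix y
    obtain x where x: "y = A x" using \<open>surj A\<close> by (metis surjD)
    obtain n where "norm x < real n" using reals_Archimedean2 by blast
    then have "y \<in> A ` ball 0 (real (Suc n))" unfolding x by simp
    then have "y \<in> F n" unfolding F_def by (rule closure_subset[THEN subsetD])
    then show "y \<in> (\<Union>n. F n)" by blast
  qed
  have "\<exists>n. interior (F n) \<noteq> {}"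
  proof (rule ccontr)
    assume "\<nexists>n. interior (F n) \<noteq> {}"
    then have "euclidean interior_of (\<Union>(range F)) = {}"
      using completely_metrizable_space_euclidean
      by (intro Baire_category_alt) (auto simp: F_def closed_closedin[symmetric])
    then show False using covers by simp
  qed
  then obtain n y0 where "y0 \<in> interior (F n)" by blast
  then obtain e where e: "e > 0" "ball y0 e \<subseteq> F n"
    by (meson openE open_interior interior_subset subset_trans)
  define N where "N = real (Suc n)"
  have approx: "\<exists>x. norm x < N \<and> dist (A x) y < d" if "y \<in> ball y0 e" "d > 0" for y d
    using e that closure_approachable[of y "A ` ball 0 N"] by (fastforce simp: F_def N_def)
  show thesis
  proof
    show "2 * N > 0" "e > 0" using e by (auto simp: N_def)
    fix z :: 'b and d :: real
    assume "norm z < e" "d > 0"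
    then have "y0 + z \<in> ball y0 e" "y0 \<in> ball y0 e" "d / 2 > 0" using e by (auto simp: dist_norm)
    \<comment> \<open>the difference of approximate preimages of \<open>y0 + z\<close> and of \<open>y0\<close>\<close>
    then obtain x1 x2 where x1: "norm x1 < N" "dist (A x1) (y0 + z) < d / 2"
      and x2: "norm x2 < N" "dist (A x2) y0 < d / 2"
      using approx by metis
    have "norm (x1 - x2) < 2 * N"
      using norm_triangle_ineq4[of x1 x2] x1 x2 by linarith
    moreover have "dist (A (x1 - x2)) z \<le> dist (A x1) (y0 + z) + dist (A x2) y0"
      using norm_triangle_ineq4[of "A x1 - (y0 + z)" "A x2 - y0"]
      by (simp add: A.diff dist_norm algebra_simps)
    then have "dist (A (x1 - x2)) z < d" using x1(2) x2(2) by linarith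
    ultimately show "\<exists>x. norm x < 2 * N \<and> dist (A x) z < d" by blast
  qed
qed

lemma bounded_linear_surj_approx_preimage:
  fixes A :: "'a::banach \<Rightarrow> 'b::banach"
  assumes "bounded_linear A" and "surj A"
  obtains M where "M > 0" "\<And>y. \<exists>x. norm x \<le> M * norm y \<and> norm (y - A x) \<le> norm y / 2"
proof -
  interpret A: bounded_linear A by fact
  obtain N e where N: "N > 0" "e > 0"
    and dense: "\<And>z d. norm z < e \<Longrightarrow> d > 0 \<Longrightarrow> \<exists>x. norm x < N \<and> dist (A x) z < d"
    using bounded_linear_surj_image_ball_dense[OF assms] by blast
  have preimage: "\<exists>x. norm x \<le> (2 * N / e) * norm y \<and> norm (y - A x) \<le> norm y / 2" for y
  proof (cases "y = 0")
    case False
    \<comment> \<open>rescale \<open>y\<close> into the ball of radius \<open>e\<close>, approximate there and scale back\<close>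
    define t where "t = e / (2 * norm y)"
    have t: "t > 0" "norm (t *\<^sub>R y) < e" using N False by (auto simp: t_def)
    then obtain x' where x': "norm x' < N" "dist (A x') (t *\<^sub>R y) < t * (norm y / 2)"
      using dense[of "t *\<^sub>R y" "t * (norm y / 2)"] False by auto
    have "norm ((1/t) *\<^sub>R x') \<le> (2 * N / e) * norm y"
      using x'(1) t(1) N False by (simp add: t_def field_simps)
    moreover have "y - A ((1/t) *\<^sub>R x') = (1/t) *\<^sub>R (t *\<^sub>R y - A x')"
      using t(1) by (simp add: A.scaleR scaleR_diff_right)
    then have "norm (y - A ((1/t) *\<^sub>R x')) = dist (A x') (t *\<^sub>R y) / t"
      using t(1) by (simp add: dist_norm norm_minus_commute)
    moreover have "dist (A x') (t *\<^sub>R y) / t \<le> norm y / 2"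
      using x'(2) t(1) by (simp add: field_simps)
    ultimately show ?thesis by (metis order_trans)
  qed (auto intro: exI[of _ 0])
  show thesis using N preimage by (intro that[of "2 * N / e"]) auto
qed

text \<open>The quantitative open mapping theorem; the right inverse \<open>R\<close> is in general not linear.\<close>
lemma bounded_linear_surj_right_inverse:
  fixes A :: "'a::banach \<Rightarrow> 'b::banach"
  assumes "bounded_linear A" and "surj A"
  obtains C R where "C > 0" "\<And>y. A (R y) = y" "\<And>y. norm (R y) \<le> C * norm y"
proof -
  interpret A: bounded_linear A by fact
  obtain M where M: "M > 0"
    and "\<And>y. \<exists>x. norm x \<le> M * norm y \<and> norm (y - A x) \<le> norm y / 2"
    using bounded_linear_surj_approx_preimage[OF assms] by blast
  then obtain P where P: "\<And>y. norm (P y) \<le> M * norm y" "\<And>y. norm (y - A (P y)) \<le> norm y / 2"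
    by metis
  have "\<exists>x. A x = y \<and> norm x \<le> (2 * M) * norm y" for y
  proof -
    \<comment> \<open>iterative correction: the residuals \<open>r k\<close> halve, and the corrections \<open>P (r k)\<close> sum to a preimage\<close>
    define r where "r k = ((\<lambda>r. r - A (P r)) ^^ k) y" for k
    have rS: "r (Suc k) = r k - A (P (r k))" for k by (simp add: r_def)
    have rb: "norm (r k) \<le> norm y * (1/2)^k" for k
    proof (induction k)
      case (Suc k)
      then show ?case using P(2)[of "r k"] by (simp add: rS)
    qed (simp add: r_def)
    have xb: "norm (P (r k)) \<le> M * norm y * (1/2)^k" for k
      using order_trans[OF P(1) mult_left_mono[OF rb]] M by (simp add: mult.assoc)
    have sg: "summable (\<lambda>k. M * norm y * (1/2::real)^k)"
      by (intro summable_mult summable_geometric) simp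
    have sx: "summable (\<lambda>k. P (r k))"
      using xb by (intro summable_comparison_test'[OF sg, of 0]) auto
    have "r \<longlonglongrightarrow> 0"
    proof (rule Lim_null_comparison)
      show "\<forall>\<^sub>F k in sequentially. norm (r k) \<le> norm y * (1/2) ^ k" using rb by simp
      show "(\<lambda>k. norm y * (1/2::real) ^ k) \<longlonglongrightarrow> 0"
        by (intro tendsto_mult_right_zero LIMSEQ_realpow_zero) auto
    qed
    then have "(\<lambda>k. r k - r (Suc k)) sums (r 0 - 0)" by (rule telescope_sums')
    then have "(\<lambda>k. A (P (r k))) sums y" by (simp add: rS r_def)
    then have "A (\<Sum>k. P (r k)) = y"
      using A.sums[OF summable_sums[OF sx]] sums_unique2 by blast
    moreover have "norm (\<Sum>k. P (r k)) \<le> 2 * M * norm y"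
      using norm_suminf_le[OF xb sg] by (simp add: suminf_mult suminf_geometric)
    ultimately show ?thesis by blast
  qed
  then obtain R where "\<And>y. A (R y) = y \<and> norm (R y) \<le> (2 * M) * norm y" by metis
  then show thesis using that[of "2 * M" R] M by auto
qed

lemma bounded_linear_surj_chain:
  fixes A :: "'a::banach \<Rightarrow> 'a"
  assumes "bounded_linear A" and "surj A" and "(A ^^ n) x = 0" and "n \<ge> 1"
  obtains c K D where "A (c 0) = 0" "\<And>k. A (c (Suc k)) = c k"
    "\<And>i. i < n \<Longrightarrow> c (n - Suc i) = (A ^^ i) x" "\<And>k. norm (c k) \<le> K * D ^ k" "D > 0"
proof -
  obtain C R where C: "C > 0" and R: "\<And>y. A (R y) = y" "\<And>y. norm (R y) \<le> C * norm y"
    using bounded_linear_surj_right_inverse[OF assms(1,2)] by blast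
  define c where "c k = (if k < n then (A ^^ (n - Suc k)) x else (R ^^ (k - (n - 1))) x)" for k
  obtain m where n: "n = Suc m" using assms(4) by (cases n) auto
  have c0: "A (c 0) = 0" using assms(3) by (simp add: c_def n)
  have cS: "A (c (Suc k)) = c k" for k
  proof -
    consider "Suc k < n" | "Suc k = n" | "Suc k > n" by linarith
    then show ?thesis
    proof cases
      case 1
      then have "A (c (Suc k)) = (A ^^ Suc (n - Suc (Suc k))) x" by (simp add: c_def)
      also have "Suc (n - Suc (Suc k)) = n - Suc k" using 1 by simp
      finally show ?thesis using 1 by (simp add: c_def)
    next
      case 2
      then show ?thesis by (simp add: c_def R(1))
    next
      case 3
      then have "Suc k - (n - 1) = Suc (k - (n - 1))" by simp
      with 3 show ?thesis by (simp add: c_def R(1))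
    qed
  qed
  have top: "c (n - Suc i) = (A ^^ i) x" if "i < n" for i
    using that by (simp add: c_def)
  define K where "K = (\<Sum>j<n. norm ((A ^^ j) x))"
  define D where "D = C + 1"
  have D: "D > 0" "D \<ge> 1" using C by (auto simp: D_def)
  have K: "K \<ge> 0" "norm x \<le> K"
    using member_le_sum[of 0 "{..<n}" "\<lambda>j. norm ((A ^^ j) x)"] assms(4)
    by (auto simp: K_def sum_nonneg)
  have Rpow: "norm ((R ^^ j) y) \<le> C ^ j * norm y" for j y
  proof (induction j)
    case (Suc j)
    then show ?case
      using order_trans[OF R(2) mult_left_mono[OF Suc]] C by (simp add: mult.assoc)
  qed simp
  have "norm (c k) \<le> K * D ^ k" for k
  proof (cases "k < n")
    case True
    then have "norm (c k) \<le> K"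
      using member_le_sum[of "n - Suc k" "{..<n}" "\<lambda>j. norm ((A ^^ j) x)"]
      by (simp add: c_def K_def)
    also have "\<dots> \<le> K * D ^ k" using K D by (simp add: mult_le_cancel_left1 one_le_power)
    finally show ?thesis .
  next
    case False
    then have "norm (c k) \<le> C ^ (k - (n - 1)) * norm x" by (simp add: c_def Rpow)
    also have "\<dots> \<le> D ^ (k - (n - 1)) * norm x"
      using C by (intro mult_right_mono power_mono) (auto simp: D_def)
    also have "\<dots> \<le> D ^ k * K"
      using D K by (intro mult_mono power_increasing) auto
    finally show ?thesis by (simp add: mult.commute)
  qed
  with c0 cS top D show thesis by (intro that) auto
qed

lemma nonzero_element_if_dim_pos:
  assumes "vector_space.dim (scaleC :: complex \<Rightarrow> 'a::chilbert_space \<Rightarrow> 'a) E \<ge> 1"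
  obtains v where "v \<in> E" "v \<noteq> 0"
proof -
  interpret V: vector_space "scaleC :: complex \<Rightarrow> 'a \<Rightarrow> 'a"
    by unfold_locales (simp_all add: scaleC_add_right scaleC_add_left scaleC_scaleC scaleC_one)
  show thesis
  proof (rule ccontr)
    assume "\<not> thesis"
    then have "E \<subseteq> {0}" using that by blast
    then have "V.span E = V.span {}" by (metis V.span_empty V.span_insert_0 subset_singletonD)
    then have "V.dim E = card ({}::'a set)"
      by (rule V.dim_eq_card[OF _ V.independent_empty, OF sym])
    then show False using assms by simp
  qed
qed

definition chain_series :: "(nat \<Rightarrow> 'a::chilbert_space) \<Rightarrow> complex \<Rightarrow> 'a" where
  "chain_series c u = (\<Sum>k. scaleC (u ^ k) (c k))"

lemma summable_chain_series:
  fixes c :: "nat \<Rightarrow> 'a::chilbert_space"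
  assumes "\<And>k. norm (c k) \<le> K * D ^ k" and "D > 0" and "cmod u * D < 1"
  shows "summable (\<lambda>k. scaleC (u ^ k) (c k))"
proof (rule summable_comparison_test'[where N = 0])
  show "summable (\<lambda>k. K * (cmod u * D) ^ k)"
    using assms(2,3) by (intro summable_mult summable_geometric) simp
  fix k :: nat
  have "norm (scaleC (u ^ k) (c k)) \<le> cmod u ^ k * (K * D ^ k)"
    by (simp add: norm_scaleC norm_power mult_left_mono assms(1))
  then show "norm (scaleC (u ^ k) (c k)) \<le> K * (cmod u * D) ^ k"
    by (simp add: power_mult_distrib mult_ac)
qed

lemma chain_series_0 [simp]: "chain_series c 0 = c 0"
proof -
  have "(\<lambda>k. scaleC (0 ^ k) (c k)) = (\<lambda>k. if k = 0 then c 0 else 0)"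
    by (rule ext) (simp add: scaleC_one power_0_left)
  moreover have "(\<lambda>k::nat. if k = 0 then c 0 else 0) sums c 0" by (rule sums_single)
  ultimately show ?thesis unfolding chain_series_def by (simp add: sums_iff)
qed

lemma chain_series_eigenvector:
  fixes A :: "'a::chilbert_space \<Rightarrow> 'a"
  assumes "cblinear A" and "A (c 0) = 0" and "\<And>k. A (c (Suc k)) = c k"
    and "summable (\<lambda>k. scaleC (u ^ k) (c k))"
  shows "A (chain_series c u) = scaleC u (chain_series c u)"
proof -
  interpret A: bounded_linear A using assms(1) by (rule cblinearD)
  interpret U: bounded_linear "\<lambda>x::'a. scaleC u x" by (rule bounded_linear_scaleC)
  have s: "(\<lambda>k. scaleC (u ^ k) (c k)) sums chain_series c u"
    unfolding chain_series_def using assms(4) by (rule summable_sums)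
  \<comment> \<open>\<open>A\<close> shifts the series one step down, which is multiplication by \<open>u\<close>\<close>
  have "(\<lambda>k. A (scaleC (u ^ Suc k) (c (Suc k)))) = (\<lambda>k. scaleC u (scaleC (u ^ k) (c k)))"
    by (simp add: cblinearD(2)[OF assms(1)] assms(3) scaleC_scaleC)
  with U.sums[OF s] have "(\<lambda>k. A (scaleC (u ^ Suc k) (c (Suc k)))) sums scaleC u (chain_series c u)"
    by simp
  then have "(\<lambda>k. A (scaleC (u ^ k) (c k))) sums scaleC u (chain_series c u)"
    by (subst (asm) sums_Suc_iff) (simp add: cblinearD(2)[OF assms(1)] assms(2))
  with A.sums[OF s] show ?thesis by (rule sums_unique2)
qed

lemma has_fps_expansion_cinner_chain_series:
  fixes B :: "'a::chilbert_space \<Rightarrow> 'a"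
  assumes "cblinear B" and "\<And>k. norm (c k) \<le> K * D ^ k" and "D > 0"
  shows "(\<lambda>u. cinner (B (chain_series c u)) v) has_fps_expansion Abs_fps (\<lambda>k. cinner (B (c k)) v)"
proof (rule has_fps_expansionI)
  interpret L: bounded_linear "\<lambda>x. cinner (B x) v"
    by (rule bounded_linear_compose[OF bounded_linear_cinner_left cblinearD(1)[OF assms(1)]])
  have "\<forall>\<^sub>F u in nhds 0. u \<in> ball 0 (1 / D)"
    using assms(3) by (intro eventually_nhds_in_open) auto
  then show "\<forall>\<^sub>F u in nhds 0. (\<lambda>k. Abs_fps (\<lambda>k. cinner (B (c k)) v) $ k * u ^ k)
      sums cinner (B (chain_series c u)) v"
  proof eventually_elim
    case (elim u)
    then have "summable (\<lambda>k. scaleC (u ^ k) (c k))"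
      using assms(3) by (intro summable_chain_series[OF assms(2,3)]) (simp add: field_simps)
    from L.sums[OF summable_sums[OF this]] show ?case
      by (simp add: chain_series_def cblinearD(2)[OF assms(1)] cinner_scaleC_left mult.commute)
  qed
qed

lemma scalar_symbol_chain_series:
  fixes T S :: "'a::chilbert_space \<Rightarrow> 'a"
  assumes "cblinear T" and "scalar_symbol T \<Omega> S \<phi>" and "open \<Omega>" and "w0 \<in> \<Omega>"
    and "T (c 0) - scaleC w0 (c 0) = 0" and "\<And>k. T (c (Suc k)) - scaleC w0 (c (Suc k)) = c k"
    and "\<And>k. norm (c k) \<le> K * D ^ k" and "D > 0"
  shows "\<forall>\<^sub>F u in nhds 0. S (chain_series c u) = scaleC (\<phi> (w0 + u)) (chain_series c u)"
proof -
  obtain r where r: "r > 0" "ball w0 r \<subseteq> \<Omega>" using assms(3,4) openE by blast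
  have "\<forall>\<^sub>F u in nhds 0. u \<in> ball 0 (min r (1 / D))"
    using r assms(8) by (intro eventually_nhds_in_open) auto
  then show ?thesis
  proof eventually_elim
    case (elim u)
    then have "summable (\<lambda>k. scaleC (u ^ k) (c k))"
      using assms(8) by (intro summable_chain_series[OF assms(7,8)]) (simp add: field_simps)
    then have "T (chain_series c u) - scaleC w0 (chain_series c u) = scaleC u (chain_series c u)"
      by (rule chain_series_eigenvector[OF cblinear_minus_scaleC[OF assms(1)] assms(5,6)])
    then have "chain_series c u \<in> eigsp T (w0 + u)"
      by (simp add: eigsp_def scaleC_add_left algebra_simps)
    moreover have "w0 + u \<in> \<Omega>" using elim r by (auto simp: dist_norm)
    ultimately show ?case using assms(2) by (simp add: scalar_symbol_def)
  qed
qed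

lemma scalar_symbol_analytic_at:
  fixes T S :: "'a::chilbert_space \<Rightarrow> 'a"
  assumes "cblinear T" and "cblinear S" and "scalar_symbol T \<Omega> S \<phi>"
    and "open \<Omega>" and "w0 \<in> \<Omega>" and "surj (\<lambda>x. T x - scaleC w0 x)"
    and "T v = scaleC w0 v" and "v \<noteq> 0"
  shows "\<phi> analytic_on {w0}"
proof -
  let ?A = "\<lambda>x. T x - scaleC w0 x"
  have A: "cblinear ?A" using assms(1) by (rule cblinear_minus_scaleC)
  have "(?A ^^ 1) v = 0" using assms(7) by simp
  then obtain c K D where c0: "?A (c 0) = 0" and cS: "\<And>k. ?A (c (Suc k)) = c k"
    and top: "\<And>i. i < 1 \<Longrightarrow> c (1 - Suc i) = (?A ^^ i) v"
    and bnd: "\<And>k. norm (c k) \<le> K * D ^ k" and D: "D > 0"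
    using bounded_linear_surj_chain[OF cblinearD(1)[OF A] assms(6)] by blast
  have c_init: "c 0 = v" using top[of 0] by simp
  define f where "f = (\<lambda>u. cinner (chain_series c u) v)"
  define g where "g = (\<lambda>u. cinner (S (chain_series c u)) v)"
  define F where "F = Abs_fps (\<lambda>k. cinner (c k) v)"
  define G where "G = Abs_fps (\<lambda>k. cinner (S (c k)) v)"
  have fF: "f has_fps_expansion F"
    using has_fps_expansion_cinner_chain_series[OF cblinear_id bnd D] by (simp add: f_def F_def)
  have gG: "g has_fps_expansion G"
    using has_fps_expansion_cinner_chain_series[OF assms(2) bnd D] by (simp add: g_def G_def)
  have f0: "f 0 \<noteq> 0" and F0: "F $ 0 \<noteq> 0"
    using assms(8) by (simp_all add: f_def F_def c_init cinner_self)
  have "continuous (at 0) f" by (rule has_fps_expansion_imp_continuous[OF fF])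
  then have "\<forall>\<^sub>F u in at 0. f u \<noteq> 0"
    using f0 by (intro tendsto_imp_eventually_ne) (simp_all add: continuous_at)
  then have "\<forall>\<^sub>F u in nhds 0. f u \<noteq> 0" using f0 by (simp add: eventually_nhds_conv_at)
  moreover have "\<forall>\<^sub>F u in nhds 0. S (chain_series c u) = scaleC (\<phi> (w0 + u)) (chain_series c u)"
    by (rule scalar_symbol_chain_series[OF assms(1,3,4,5) c0 cS bnd D])
  ultimately have "\<forall>\<^sub>F u in nhds 0. g u / f u = \<phi> (w0 + u)"
    by eventually_elim (simp add: f_def g_def cinner_scaleC_left)
  then have "(\<lambda>u. \<phi> (w0 + u)) has_fps_expansion G / F"
    using has_fps_expansion_divide'[OF gG fF F0]
    by (rule has_fps_expansion_cong[OF _ refl, THEN iffD1])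
  then show ?thesis by (rule has_fps_expansion_imp_analytic)
qed

lemma scalar_symbol_taylor:
  fixes T S :: "'a::chilbert_space \<Rightarrow> 'a"
  assumes "cblinear T" and "cblinear S" and "scalar_symbol T \<Omega> S \<phi>"
    and "open \<Omega>" and "w0 \<in> \<Omega>" and "surj (\<lambda>x. T x - scaleC w0 x)"
    and "\<phi> analytic_on {w0}"
    and "((\<lambda>x. T x - scaleC w0 x) ^^ n) x = 0" and "n \<ge> 1"
  shows "S x = (\<Sum>k<n. scaleC ((deriv ^^ k) \<phi> w0 / fact k) (((\<lambda>x. T x - scaleC w0 x) ^^ k) x))"
proof -
  let ?A = "\<lambda>x. T x - scaleC w0 x"
  have A: "cblinear ?A" using assms(1) by (rule cblinear_minus_scaleC)
  obtain c K D where c0: "?A (c 0) = 0" and cS: "\<And>k. ?A (c (Suc k)) = c k"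
    and top: "\<And>i. i < n \<Longrightarrow> c (n - Suc i) = (?A ^^ i) x"
    and bnd: "\<And>k. norm (c k) \<le> K * D ^ k" and D: "D > 0"
    using bounded_linear_surj_chain[OF cblinearD(1)[OF A] assms(6,8,9)] by blast
  let ?\<Phi> = "fps_expansion \<phi> w0"
  have "cinner (S x) v = cinner (\<Sum>k<n. scaleC ((deriv ^^ k) \<phi> w0 / fact k) ((?A ^^ k) x)) v"
    for v
  proof -
    define F where "F = Abs_fps (\<lambda>k. cinner (c k) v)"
    define G where "G = Abs_fps (\<lambda>k. cinner (S (c k)) v)"
    have fF: "(\<lambda>u. cinner (chain_series c u) v) has_fps_expansion F"
      using has_fps_expansion_cinner_chain_series[OF cblinear_id bnd D] by (simp add: F_def)
    have gG: "(\<lambda>u. cinner (S (chain_series c u)) v) has_fps_expansion G"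
      using has_fps_expansion_cinner_chain_series[OF assms(2) bnd D] by (simp add: G_def)
    have "\<forall>\<^sub>F u in nhds 0. S (chain_series c u) = scaleC (\<phi> (w0 + u)) (chain_series c u)"
      by (rule scalar_symbol_chain_series[OF assms(1,3,4,5) c0 cS bnd D])
    then have "\<forall>\<^sub>F u in nhds 0. \<phi> (w0 + u) * cinner (chain_series c u) v
        = cinner (S (chain_series c u)) v"
      by eventually_elim (simp add: cinner_scaleC_left)
    moreover have "(\<lambda>u. \<phi> (w0 + u) * cinner (chain_series c u) v) has_fps_expansion ?\<Phi> * F"
      by (rule has_fps_expansion_mult[OF analytic_at_imp_has_fps_expansion[OF assms(7)] fF])
    ultimately have "(\<lambda>u. cinner (S (chain_series c u)) v) has_fps_expansion ?\<Phi> * F"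
      by (rule has_fps_expansion_cong[OF _ refl, THEN iffD1])
    with gG have GF: "G = ?\<Phi> * F" by (rule fps_expansion_unique_complex)
    have "cinner (S x) v = G $ (n - 1)"
      using top[of 0] assms(9) by (simp add: G_def)
    also have "\<dots> = (\<Sum>i=0..n - 1. ?\<Phi> $ i * F $ (n - 1 - i))"
      by (simp only: GF fps_mult_nth)
    also have "\<dots> = (\<Sum>i<n. (deriv ^^ i) \<phi> w0 / fact i * cinner ((?A ^^ i) x) v)"
    proof (rule sum.cong)
      show "{0..n - 1} = {..<n}" using assms(9) by auto
      show "?\<Phi> $ i * F $ (n - 1 - i) = (deriv ^^ i) \<phi> w0 / fact i * cinner ((?A ^^ i) x) v"
        if "i \<in> {..<n}" for i
        using that top[of i] by (simp add: F_def fps_expansion_def)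
    qed
    also have "\<dots> = cinner (\<Sum>k<n. scaleC ((deriv ^^ k) \<phi> w0 / fact k) ((?A ^^ k) x)) v"
    proof -
      interpret L: bounded_linear "\<lambda>x. cinner x v" by (rule bounded_linear_cinner_left)
      show ?thesis by (simp add: L.sum cinner_scaleC_left)
    qed
    finally show ?thesis .
  qed
  then show ?thesis by (rule cinner_eqI)
qed

theorem proposition5p5:
  fixes T S :: "'h::{chilbert_space, second_countable_topology} \<Rightarrow> 'h"
    and \<Omega> :: "complex set" and m :: nat and \<phi> :: "complex \<Rightarrow> complex"
  assumes "open \<Omega>" and "connected \<Omega>" and "m \<ge> 1"
    and "CD_class \<Omega> m T" and "0 \<in> \<Omega>"
    and "S \<in> CT_class T \<Omega>" and "scalar_symbol T \<Omega> S \<phi>"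
  shows "\<phi> holomorphic_on \<Omega> \<and>
    (\<forall>n\<ge>1. \<forall>x. (T ^^ n) x = 0 \<longrightarrow>
        S x = (\<Sum>k<n. scaleC ((deriv ^^ k) \<phi> 0 / fact k) ((T ^^ k) x)))"
proof -
  have T: "cblinear T" and surj: "\<And>w. w \<in> \<Omega> \<Longrightarrow> surj (\<lambda>x. T x - scaleC w x)"
    and dim: "\<And>w. w \<in> \<Omega> \<Longrightarrow> vector_space.dim scaleC (eigsp T w) \<ge> 1"
    using assms(3,4) unfolding CD_class_def by simp_all
  have S: "cblinear S" using assms(6) by (simp add: CT_class_def commutant_def)
  have analytic: "\<phi> analytic_on {w}" if w: "w \<in> \<Omega>" for w
  proof -
    obtain v where "v \<in> eigsp T w" "v \<noteq> 0"
      using nonzero_element_if_dim_pos[OF dim[OF w]] by blast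
    then show ?thesis
      using scalar_symbol_analytic_at[OF T S assms(7,1) w surj[OF w]] by (simp add: eigsp_def)
  qed
  have T0: "(\<lambda>x. T x - scaleC 0 x) = T" by simp
  have "\<phi> holomorphic_on \<Omega>"
    using analytic analytic_on_analytic_at analytic_imp_holomorphic by blast
  moreover note scalar_symbol_taylor[OF T S assms(7,1,5) surj[OF assms(5)] analytic[OF assms(5)],
    unfolded T0]
  ultimately show ?thesis by blast
qed

end
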